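(* Let $D,L,T\subset\mathbb{P}^2$ be three distinct lines passing through a common point $a\in\mathbb{P}^2$. Then there exists a plane curve $S\subset\mathbb{P}^2$ of degree $6$ such that: (1) $S$ is irreducible and does not pass through $a$; (2) $S$ meets $D$ in $3$ distinct points, at which $S$ is smooth and tangent to $D$; (3) $S$ meets $L$ in $3$ distinct points, which are double points of $S$; (4) $S$ meets $T$ in $2$ distinct points, which are triple points of $S$. If $D,L,T$ are defined over $\mathbb{Q}$, these $8$ points can be chosen to be defined over $\mathbb{Q}$ and $S$ can be defined over a number field. *)

theory Defs
  imports Complex_Main "HOL-Computational_Algebra.Polynomial"
begin

text \<open>Points of the complex projective plane are represented by nonzero vectors of
  complex^3 (homogeneous coordinates); lines by nonzero linear forms (coefficient vectors);
  plane curves of degree d by nonzero ternary forms of degree d, given by their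
  coefficient function on monomials x^i y^j z^k.\<close>

type_synonym cvec = "complex \<times> complex \<times> complex"
type_synonym tform = "nat \<times> nat \<times> nat \<Rightarrow> complex"

definition nonzero :: "cvec \<Rightarrow> bool" where
  "nonzero p \<longleftrightarrow> p \<noteq> (0, 0, 0)"

definition vscale :: "complex \<Rightarrow> cvec \<Rightarrow> cvec" where
  "vscale c p = (case p of (x, y, z) \<Rightarrow> (c * x, c * y, c * z))"

definition proj_eq :: "cvec \<Rightarrow> cvec \<Rightarrow> bool" where
  "proj_eq p q \<longleftrightarrow> (\<exists>c. c \<noteq> 0 \<and> q = vscale c p)"

definition cdot :: "cvec \<Rightarrow> cvec \<Rightarrow> complex" where
  "cdot l p = (case l of (a, b, c) \<Rightarrow> case p of (x, y, z) \<Rightarrow> a * x + b * y + c * z)"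

definition on_line :: "cvec \<Rightarrow> cvec \<Rightarrow> bool" where
  "on_line l p \<longleftrightarrow> cdot l p = 0"

definition fmonos :: "nat \<Rightarrow> (nat \<times> nat \<times> nat) set" where
  "fmonos d = {(i, j, k). i + j + k = d}"

definition is_form :: "nat \<Rightarrow> tform \<Rightarrow> bool" where
  "is_form d F \<longleftrightarrow> (\<forall>m. m \<notin> fmonos d \<longrightarrow> F m = 0) \<and> (\<exists>m. F m \<noteq> 0)"

definition feval :: "nat \<Rightarrow> tform \<Rightarrow> cvec \<Rightarrow> complex" where
  "feval d F p = (case p of (x, y, z) \<Rightarrow>
     (\<Sum>(i, j, k)\<in>fmonos d. F (i, j, k) * x ^ i * y ^ j * z ^ k))"

definition irreducible_form :: "nat \<Rightarrow> tform \<Rightarrow> bool" where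
  "irreducible_form d F \<longleftrightarrow> is_form d F \<and>
     \<not> (\<exists>d1 d2 G H. d1 \<ge> 1 \<and> d2 \<ge> 1 \<and> d1 + d2 = d \<and> is_form d1 G \<and> is_form d2 H \<and>
          (\<forall>x. feval d F x = feval d1 G x * feval d2 H x))"

definition restr :: "nat \<Rightarrow> tform \<Rightarrow> cvec \<Rightarrow> cvec \<Rightarrow> complex poly" where
  "restr d F p v = (case p of (p1, p2, p3) \<Rightarrow> case v of (v1, v2, v3) \<Rightarrow>
     (\<Sum>(i, j, k)\<in>fmonos d. smult (F (i, j, k)) ([:p1, v1:] ^ i * [:p2, v2:] ^ j * [:p3, v3:] ^ k)))"

text \<open>Multiplicity of the curve F = 0 at the point p (order of vanishing of F at p):
  the least m such that some directional Taylor coefficient of order m is nonzero.\<close>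
definition mult_at :: "nat \<Rightarrow> tform \<Rightarrow> cvec \<Rightarrow> nat" where
  "mult_at d F p = (LEAST m. \<exists>v. coeff (restr d F p v) m \<noteq> 0)"

text \<open>The line l is tangent to F = 0 at p: l is contained in the tangent space
  {v. dF_p(v) = 0}.\<close>
definition tangent_at :: "nat \<Rightarrow> tform \<Rightarrow> cvec \<Rightarrow> cvec \<Rightarrow> bool" where
  "tangent_at d F l p \<longleftrightarrow> (\<forall>v. on_line l v \<longrightarrow> coeff (restr d F p v) 1 = 0)"

text \<open>P is a set of representatives of the (distinct) projective points in which the
  curve F = 0 meets the line l.\<close>
definition meets_in :: "nat \<Rightarrow> tform \<Rightarrow> cvec \<Rightarrow> cvec set \<Rightarrow> bool" where
  "meets_in d F l P \<longleftrightarrow>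
     (\<forall>p\<in>P. nonzero p \<and> on_line l p \<and> feval d F p = 0) \<and>
     (\<forall>p\<in>P. \<forall>q\<in>P. proj_eq p q \<longrightarrow> p = q) \<and>
     (\<forall>q. nonzero q \<and> on_line l q \<and> feval d F q = 0 \<longrightarrow> (\<exists>p\<in>P. proj_eq p q))"

definition rat_vec :: "cvec \<Rightarrow> bool" where
  "rat_vec p \<longleftrightarrow> (case p of (x, y, z) \<Rightarrow> x \<in> \<rat> \<and> y \<in> \<rat> \<and> z \<in> \<rat>)"

definition rat_point :: "cvec \<Rightarrow> bool" where
  "rat_point p \<longleftrightarrow> (\<exists>c. c \<noteq> 0 \<and> rat_vec (vscale c p))"

definition number_field :: "complex set \<Rightarrow> bool" where
  "number_field K \<longleftrightarrow> 0 \<in> K \<and> 1 \<in> K \<and>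
     (\<forall>x\<in>K. \<forall>y\<in>K. x + y \<in> K \<and> x * y \<in> K \<and> - x \<in> K) \<and>
     (\<forall>x\<in>K. x \<noteq> 0 \<longrightarrow> inverse x \<in> K) \<and>
     (\<exists>B. finite B \<and> B \<subseteq> K \<and> K \<subseteq> {(\<Sum>b\<in>B. of_rat (r b) * b) | r. True})"

definition over_number_field :: "tform \<Rightarrow> bool" where
  "over_number_field F \<longleftrightarrow> (\<exists>K c. number_field K \<and> c \<noteq> 0 \<and> (\<forall>m. c * F m \<in> K))"

end

(* In coordinates with D, L, T the lines x = 0, x = z, z = 0 and a = (0 : 1 : 0), the explicit
   sextic model_sextic restricts to the three lines as y^2 (y + 12 z)^2 (y - 6 z)^2,
   (y + 5 x)^2 (y - x)^2 (y - 7 x)^2 and y^3 (y - 6 x)^3; its multiplicities and tangents at the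
   eight points are read off from its partial derivatives there.

   It is irreducible: a factor G of degree e, 1 <= e <= 5, does not vanish at a, so on the line
   through a and (p1 : 0 : p3) it has e roots y, and their sum is a linear function of (p1, p3).
   Hence the root sum on L (base point (1 : 0 : 1)) is the sum of those on D and T (base points
   (0 : 0 : 1) and (1 : 0 : 0)). The roots on D and T are 0 mod 6 and those on L are 1 mod 6,
   forcing e = 0 mod 6, a contradiction.

   Any three distinct concurrent lines are moved to this model by a projective change of
   coordinates, which is defined over Q when the lines are. *)

theory Submission
  imports Defs "HOL-Computational_Algebra.Fundamental_Theorem_Algebra"
begin

section \<open>Points, lines and ternary forms\<close>

lemma vscale_vscale: "vscale a (vscale b p) = vscale (a * b) p"
  by (cases p) (simp add: vscale_def)

lemma vscale_1: "vscale 1 p = p"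
  by (cases p) (simp add: vscale_def)

lemma cdot_vscale_left: "cdot (vscale c l) p = c * cdot l p"
  by (cases l; cases p) (simp add: cdot_def vscale_def algebra_simps)

lemma cdot_vscale_right: "cdot l (vscale c p) = c * cdot l p"
  by (cases l; cases p) (simp add: cdot_def vscale_def algebra_simps)

lemma proj_eq_sym:
  assumes "proj_eq p q"
  shows "proj_eq q p"
proof -
  from assms obtain c where "c \<noteq> 0" "q = vscale c p" unfolding proj_eq_def by blast
  then have "inverse c \<noteq> 0" "p = vscale (inverse c) q" by (simp_all add: vscale_vscale vscale_1)
  then show ?thesis unfolding proj_eq_def by blast
qed

lemma proj_eq_vscale: "c \<noteq> 0 \<Longrightarrow> proj_eq p (vscale c p)"
  unfolding proj_eq_def by blast

lemma proj_eq_trans: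
  assumes "proj_eq p q" "proj_eq q r"
  shows "proj_eq p r"
proof -
  from assms obtain c c' where "c \<noteq> 0" "q = vscale c p" "c' \<noteq> 0" "r = vscale c' q"
    unfolding proj_eq_def by blast
  then have "c' * c \<noteq> 0" "r = vscale (c' * c) p" by (simp_all add: vscale_vscale)
  then show ?thesis unfolding proj_eq_def by blast
qed

lemma proj_eq_vscale_iff:
  assumes "c \<noteq> 0" "c' \<noteq> 0"
  shows "proj_eq (vscale c p) (vscale c' q) \<longleftrightarrow> proj_eq p q"
  using proj_eq_trans proj_eq_sym proj_eq_vscale[OF assms(1), of p] proj_eq_vscale[OF assms(2), of q]
  by meson

lemma nonzero_vscale_iff: "c \<noteq> 0 \<Longrightarrow> nonzero (vscale c p) \<longleftrightarrow> nonzero p"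
  by (cases p) (auto simp: nonzero_def vscale_def)

lemma on_line_vscale_iff: "c \<noteq> 0 \<Longrightarrow> on_line (vscale c l) X \<longleftrightarrow> on_line l X"
  by (simp add: on_line_def cdot_vscale_left)

lemma finite_fmonos: "finite (fmonos d)"
proof -
  have "fmonos d \<subseteq> {..d} \<times> {..d} \<times> {..d}" by (auto simp: fmonos_def)
  then show ?thesis by (rule finite_subset) auto
qed

definition homogeneous :: "nat \<Rightarrow> tform \<Rightarrow> bool" where
  "homogeneous d F \<longleftrightarrow> (\<forall>m. m \<notin> fmonos d \<longrightarrow> F m = 0)"

lemma sum_fmonos_shift:
  assumes n: "n = d + a + b + c"
    and vanish: "\<And>i j k. i + j + k = n \<Longrightarrow> g (i, j, k) \<noteq> 0 \<Longrightarrow> a \<le> i \<and> b \<le> j \<and> c \<le> k"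
  shows "(\<Sum>m\<in>fmonos n. g m) = (\<Sum>(i, j, k)\<in>fmonos d. g (i + a, j + b, k + c))"
proof -
  define s where "s = (\<lambda>(i, j, k). (i + a, j + b, k + c))"
  have inj: "inj_on s (fmonos d)" by (auto simp: s_def inj_on_def)
  have sub: "s ` fmonos d \<subseteq> fmonos n" by (auto simp: s_def fmonos_def n)
  have "g m = 0" if "m \<in> fmonos n - s ` fmonos d" for m
  proof (rule ccontr)
    obtain i j k where m: "m = (i, j, k)" by (cases m)
    assume "g m \<noteq> 0"
    with that vanish[of i j k] have "a \<le> i \<and> b \<le> j \<and> c \<le> k" by (auto simp: m fmonos_def)
    then have "m = s (i - a, j - b, k - c)" "(i - a, j - b, k - c) \<in> fmonos d"
      using that by (auto simp: m s_def fmonos_def n)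
    with that show False by blast
  qed
  then have "sum g (fmonos n) = sum g (s ` fmonos d)"
    by (intro sum.mono_neutral_right[OF finite_fmonos sub]) auto
  also have "\<dots> = sum (g \<circ> s) (fmonos d)" by (rule sum.reindex[OF inj])
  finally show ?thesis by (simp add: s_def case_prod_beta')
qed

lemma feval_eq_double_sum:
  "feval d F (x, y, z) = (\<Sum>i\<le>d. \<Sum>j\<le>d - i. F (i, j, d - i - j) * x ^ i * y ^ j * z ^ (d - i - j))"
proof -
  define s where "s = (\<lambda>(i, j). (i, j, d - i - j))"
  have inj: "inj_on s (SIGMA i:{..d}. {..d - i})" by (auto simp: s_def inj_on_def)
  have "fmonos d = s ` (SIGMA i:{..d}. {..d - i})" by (auto simp: s_def fmonos_def image_iff)
  then have "feval d F (x, y, z) =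
      (\<Sum>(i, j)\<in>(SIGMA i:{..d}. {..d - i}). F (i, j, d - i - j) * x ^ i * y ^ j * z ^ (d - i - j))"
    unfolding feval_def by (simp only: sum.reindex[OF inj]) (simp add: s_def case_prod_beta')
  then show ?thesis by (simp add: sum.Sigma)
qed

lemma feval_add: "feval d (\<lambda>m. F m + G m) p = feval d F p + feval d G p"
  unfolding feval_def by (auto simp: sum.distrib[symmetric] algebra_simps intro!: sum.cong split: prod.splits)

lemma feval_scale: "feval d (\<lambda>m. c * F m) p = c * feval d F p"
  unfolding feval_def by (auto simp: sum_distrib_left algebra_simps intro!: sum.cong split: prod.splits)

lemma feval_vscale: "feval d F (vscale c p) = c ^ d * feval d F p"
proof -
  obtain x y z where p: "p = (x, y, z)" by (cases p)
  have "feval d F (vscale c p) = (\<Sum>(i, j, k)\<in>fmonos d. c ^ d * (F (i, j, k) * x ^ i * y ^ j * z ^ k))"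
    unfolding p vscale_def feval_def prod.case
    by (intro sum.cong refl) (auto simp: fmonos_def power_mult_distrib power_add)
  also have "\<dots> = c ^ d * feval d F p"
    by (simp add: p feval_def sum_distrib_left case_prod_beta')
  finally show ?thesis .
qed

lemma feval_0_1_0: "feval d G (0, 1, 0) = G (0, d, 0)"
proof -
  have "feval d G (0, 1, 0) = (\<Sum>m\<in>fmonos d. if m = (0, d, 0) then G (0, d, 0) else 0)"
    unfolding feval_def prod.case by (intro sum.cong refl) (auto simp: fmonos_def)
  also have "\<dots> = G (0, d, 0)" by (subst sum.delta[OF finite_fmonos]) (simp add: fmonos_def)
  finally show ?thesis .
qed

lemma poly_restr: "poly (restr d F (p1, p2, p3) (v1, v2, v3)) t = feval d F (p1 + t * v1, p2 + t * v2, p3 + t * v3)"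
  unfolding restr_def feval_def
  by (auto simp: poly_sum algebra_simps intro!: sum.cong split: prod.split)

lemma restr_eqI:
  assumes "\<And>t. feval d F (p1 + t * v1, p2 + t * v2, p3 + t * v3) = feval e G (q1 + t * w1, q2 + t * w2, q3 + t * w3)"
  shows "restr d F (p1, p2, p3) (v1, v2, v3) = restr e G (q1, q2, q3) (w1, w2, w3)"
  using assms by (simp add: poly_eq_poly_eq_iff[symmetric] poly_restr fun_eq_iff)

section \<open>Taylor coefficients, multiplicity and tangency\<close>

definition form_deriv :: "cvec \<Rightarrow> tform \<Rightarrow> tform" where
  "form_deriv v F = (case v of (v1, v2, v3) \<Rightarrow> \<lambda>(i, j, k).
     v1 * of_nat (Suc i) * F (Suc i, j, k) + v2 * of_nat (Suc j) * F (i, Suc j, k) +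
     v3 * of_nat (Suc k) * F (i, j, Suc k))"

lemma pderiv_restr: "pderiv (restr (Suc d) F p v) = restr d (form_deriv v F) p v"
proof -
  obtain p1 p2 p3 where p: "p = (p1, p2, p3)" by (cases p)
  obtain v1 v2 v3 where v: "v = (v1, v2, v3)" by (cases v)
  define M where "M i j k = [:p1, v1:] ^ i * [:p2, v2:] ^ j * [:p3, v3:] ^ k" for i j k
  define A where "A = (\<lambda>(i, j, k). smult (F (i, j, k) * of_nat i * v1) (M (i - 1) j k))"
  define B where "B = (\<lambda>(i, j, k). smult (F (i, j, k) * of_nat j * v2) (M i (j - 1) k))"
  define C where "C = (\<lambda>(i, j, k). smult (F (i, j, k) * of_nat k * v3) (M i j (k - 1)))"
  have dM: "smult (F (i, j, k)) (pderiv (M i j k)) = A (i, j, k) + B (i, j, k) + C (i, j, k)" for i j k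
    by (simp add: M_def A_def B_def C_def pderiv_mult pderiv_power pderiv_pCons algebra_simps
        smult_add_right mult_ac)
  have "pderiv (restr (Suc d) F p v) = (\<Sum>m\<in>fmonos (Suc d). A m + B m + C m)"
    by (auto simp: restr_def p v M_def higher_pderiv_sum[where n = 1, simplified] dM[unfolded M_def]
        pderiv_smult intro!: sum.cong)
  also have "\<dots> = sum A (fmonos (Suc d)) + sum B (fmonos (Suc d)) + sum C (fmonos (Suc d))"
    by (simp add: sum.distrib)
  also have "sum A (fmonos (Suc d)) = (\<Sum>(i, j, k)\<in>fmonos d. A (i + 1, j + 0, k + 0))"
    by (rule sum_fmonos_shift) (auto simp: A_def)
  also have "sum B (fmonos (Suc d)) = (\<Sum>(i, j, k)\<in>fmonos d. B (i + 0, j + 1, k + 0))"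
    by (rule sum_fmonos_shift) (auto simp: B_def)
  also have "sum C (fmonos (Suc d)) = (\<Sum>(i, j, k)\<in>fmonos d. C (i + 0, j + 0, k + 1))"
    by (rule sum_fmonos_shift) (auto simp: C_def)
  also have "(\<Sum>(i, j, k)\<in>fmonos d. A (i + 1, j + 0, k + 0)) +
      (\<Sum>(i, j, k)\<in>fmonos d. B (i + 0, j + 1, k + 0)) +
      (\<Sum>(i, j, k)\<in>fmonos d. C (i + 0, j + 0, k + 1)) = restr d (form_deriv v F) p v"
    by (simp add: restr_def form_deriv_def p v M_def A_def B_def C_def sum.distrib[symmetric]
        case_prod_beta' algebra_simps smult_add_left)
  finally show ?thesis .
qed

lemma higher_pderiv_restr:
  "n \<le> d \<Longrightarrow> (pderiv ^^ n) (restr d F p v) = restr (d - n) ((form_deriv v ^^ n) F) p v"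
proof (induction n)
  case (Suc n)
  then have "d - n = Suc (d - Suc n)" by simp
  with Suc show ?case by (simp add: pderiv_restr)
qed simp

lemma coeff_restr:
  assumes "n \<le> d"
  shows "fact n * coeff (restr d F p v) n = feval (d - n) ((form_deriv v ^^ n) F) p"
proof -
  have "fact n * coeff (restr d F p v) n = coeff ((pderiv ^^ n) (restr d F p v)) 0"
    by (simp add: coeff_higher_pderiv pochhammer_fact)
  also have "\<dots> = feval (d - n) ((form_deriv v ^^ n) F) p"
    using assms by (cases p; cases v) (simp add: higher_pderiv_restr poly_0_coeff_0[symmetric] poly_restr)
  finally show ?thesis .
qed

lemma form_deriv_lincomb:
  "form_deriv v (\<lambda>m. a * F m + b * G m + c * H m) =
     (\<lambda>m. a * form_deriv v F m + b * form_deriv v G m + c * form_deriv v H m)"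
  by (auto simp: form_deriv_def algebra_simps split: prod.splits)

lemma higher_form_deriv_lincomb:
  "(form_deriv v ^^ n) (\<lambda>m. a * F m + b * G m + c * H m) =
     (\<lambda>m. a * (form_deriv v ^^ n) F m + b * (form_deriv v ^^ n) G m + c * (form_deriv v ^^ n) H m)"
  by (induction n) (simp_all add: form_deriv_lincomb)

lemma form_deriv_axes:
  "form_deriv (v1, v2, v3) F =
     (\<lambda>m. v1 * form_deriv (1, 0, 0) F m + v2 * form_deriv (0, 1, 0) F m + v3 * form_deriv (0, 0, 1) F m)"
  by (auto simp: form_deriv_def)

fun form_partials :: "nat \<Rightarrow> tform \<Rightarrow> tform set" where
  "form_partials 0 F = {F}"
| "form_partials (Suc n) F = form_partials n (form_deriv (1, 0, 0) F) \<union>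
     form_partials n (form_deriv (0, 1, 0) F) \<union> form_partials n (form_deriv (0, 0, 1) F)"

lemma feval_higher_form_deriv_eq_0:
  assumes "\<forall>G\<in>form_partials n F. feval d G p = 0"
  shows "feval d ((form_deriv v ^^ n) F) p = 0"
  using assms
proof (induction n arbitrary: F)
  case (Suc n)
  obtain v1 v2 v3 where v: "v = (v1, v2, v3)" by (cases v)
  have "(form_deriv v ^^ Suc n) F = (form_deriv v ^^ n) (form_deriv v F)"
    by (simp add: funpow_swap1)
  with Suc show ?case
    unfolding v form_deriv_axes[of v1 v2 v3 F] higher_form_deriv_lincomb
    by (simp add: feval_add feval_scale)
qed simp

lemma mult_at_eqI:
  assumes "m \<le> d"
    and lower: "\<forall>n<m. \<forall>G\<in>form_partials n F. feval (d - n) G p = 0"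
    and top: "feval (d - m) ((form_deriv v ^^ m) F) p \<noteq> 0"
  shows "mult_at d F p = m"
  unfolding mult_at_def
proof (rule Least_equality)
  show "\<exists>v. coeff (restr d F p v) m \<noteq> 0"
    using coeff_restr[OF assms(1), of F p v] top by (intro exI[of _ v]) auto
next
  fix n assume "\<exists>w. coeff (restr d F p w) n \<noteq> 0"
  then obtain w where w: "coeff (restr d F p w) n \<noteq> 0" by blast
  show "m \<le> n"
  proof (rule ccontr)
    assume "\<not> m \<le> n"
    then have "fact n * coeff (restr d F p w) n = 0"
      using coeff_restr[of n d F p w] lower feval_higher_form_deriv_eq_0 assms(1) by simp
    with w show False by simp
  qed
qed

definition form_grad :: "nat \<Rightarrow> tform \<Rightarrow> cvec \<Rightarrow> cvec" where
  "form_grad d F p = (feval (d - 1) (form_deriv (1, 0, 0) F) p,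
     feval (d - 1) (form_deriv (0, 1, 0) F) p, feval (d - 1) (form_deriv (0, 0, 1) F) p)"

lemma coeff_1_restr:
  assumes "1 \<le> d"
  shows "coeff (restr d F p v) 1 = cdot (form_grad d F p) v"
proof -
  obtain v1 v2 v3 where v: "v = (v1, v2, v3)" by (cases v)
  have "coeff (restr d F p v) 1 = feval (d - 1) (form_deriv v F) p"
    using coeff_restr[OF assms, of F p v] by simp
  also have "\<dots> = cdot (form_grad d F p) v"
    unfolding v form_deriv_axes[of v1 v2 v3 F]
    by (simp add: form_grad_def cdot_def feval_add feval_scale algebra_simps)
  finally show ?thesis .
qed

lemma tangent_atI:
  assumes "1 \<le> d" and "form_grad d F p = vscale c l"
  shows "tangent_at d F l p"
  unfolding tangent_at_def on_line_def
  by (intro allI impI) (simp only: coeff_1_restr[OF assms(1)] assms(2) cdot_vscale_left mult_zero_right)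

section \<open>Forms with coefficients in a subsemiring\<close>

definition mul_monomial :: "nat \<Rightarrow> nat \<Rightarrow> nat \<Rightarrow> tform \<Rightarrow> tform" where
  "mul_monomial a b c C = (\<lambda>(i, j, k). if a \<le> i \<and> b \<le> j \<and> c \<le> k then C (i - a, j - b, k - c) else 0)"

lemma feval_mul_monomial:
  "feval (d + a + b + c) (mul_monomial a b c C) (x, y, z) = x ^ a * y ^ b * z ^ c * feval d C (x, y, z)"
proof -
  have "feval (d + a + b + c) (mul_monomial a b c C) (x, y, z) =
      (\<Sum>(i, j, k)\<in>fmonos d. C (i, j, k) * x ^ (i + a) * y ^ (j + b) * z ^ (k + c))"
    unfolding feval_def mul_monomial_def prod.case by (subst sum_fmonos_shift[OF refl]) (auto split: if_splits)
  also have "\<dots> = x ^ a * y ^ b * z ^ c * feval d C (x, y, z)"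
    by (simp add: feval_def sum_distrib_left power_add algebra_simps case_prod_beta')
  finally show ?thesis .
qed

definition complex_subsemiring :: "complex set \<Rightarrow> bool" where
  "complex_subsemiring K \<longleftrightarrow> 0 \<in> K \<and> 1 \<in> K \<and> (\<forall>a\<in>K. \<forall>b\<in>K. a + b \<in> K \<and> a * b \<in> K)"

definition vec_in :: "complex set \<Rightarrow> cvec \<Rightarrow> bool" where
  "vec_in K p \<longleftrightarrow> (case p of (x, y, z) \<Rightarrow> x \<in> K \<and> y \<in> K \<and> z \<in> K)"

definition form_fun :: "complex set \<Rightarrow> nat \<Rightarrow> (cvec \<Rightarrow> complex) \<Rightarrow> bool" where
  "form_fun K d f \<longleftrightarrow> (\<exists>C. homogeneous d C \<and> range C \<subseteq> K \<and> f = feval d C)"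

context
  fixes K :: "complex set"
  assumes K: "complex_subsemiring K"
begin

lemma subsemiring_closed:
  "0 \<in> K" "1 \<in> K" "a \<in> K \<Longrightarrow> b \<in> K \<Longrightarrow> a + b \<in> K" "a \<in> K \<Longrightarrow> b \<in> K \<Longrightarrow> a * b \<in> K"
  using K by (auto simp: complex_subsemiring_def)

lemma form_fun_zero: "form_fun K d (\<lambda>X. 0)"
  unfolding form_fun_def homogeneous_def
  by (intro exI[of _ "\<lambda>m. 0"]) (auto simp: fun_eq_iff feval_def subsemiring_closed)

lemma form_fun_one: "form_fun K 0 (\<lambda>X. 1)"
  unfolding form_fun_def homogeneous_def
  by (intro exI[of _ "\<lambda>m. if m = (0, 0, 0) then 1 else 0"])
     (auto simp: fun_eq_iff feval_def fmonos_def subsemiring_closed split: prod.splits)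

lemma form_fun_add:
  assumes "form_fun K d f" "form_fun K d g"
  shows "form_fun K d (\<lambda>X. f X + g X)"
proof -
  from assms obtain F G where "homogeneous d F" "range F \<subseteq> K" "f = feval d F"
    "homogeneous d G" "range G \<subseteq> K" "g = feval d G"
    unfolding form_fun_def by blast
  then show ?thesis
    unfolding form_fun_def
    by (intro exI[of _ "\<lambda>m. F m + G m"]) (auto simp: homogeneous_def feval_add intro!: subsemiring_closed)
qed

lemma form_fun_scale:
  assumes "c \<in> K" "form_fun K d f"
  shows "form_fun K d (\<lambda>X. c * f X)"
proof -
  from assms obtain F where "homogeneous d F" "range F \<subseteq> K" "f = feval d F"
    unfolding form_fun_def by blast
  with assms(1) show ?thesis
    unfolding form_fun_def
    by (intro exI[of _ "\<lambda>m. c * F m"]) (auto simp: homogeneous_def feval_scale intro!: subsemiring_closed)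
qed

lemma form_fun_sum:
  "finite A \<Longrightarrow> (\<And>a. a \<in> A \<Longrightarrow> form_fun K d (f a)) \<Longrightarrow> form_fun K d (\<lambda>X. \<Sum>a\<in>A. f a X)"
  by (induction A rule: finite_induct) (simp_all add: form_fun_zero form_fun_add)

lemma form_fun_mul_linear:
  assumes l: "vec_in K l" and f: "form_fun K d f"
  shows "form_fun K (Suc d) (\<lambda>X. cdot l X * f X)"
proof -
  obtain l1 l2 l3 where l_eq: "l = (l1, l2, l3)" by (cases l)
  from f obtain C where C: "homogeneous d C" "range C \<subseteq> K" "f = feval d C" unfolding form_fun_def by blast
  define C' where
    "C' = (\<lambda>m. l1 * mul_monomial 1 0 0 C m + l2 * mul_monomial 0 1 0 C m + l3 * mul_monomial 0 0 1 C m)"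
  have hom: "homogeneous (Suc d) C'"
    using C(1) by (auto simp: homogeneous_def C'_def mul_monomial_def fmonos_def)
  have "mul_monomial a b c C m \<in> K" for a b c m
    using C(2) by (auto simp: mul_monomial_def subsemiring_closed split: prod.splits)
  then have range: "range C' \<subseteq> K"
    using l by (auto simp: C'_def l_eq vec_in_def intro!: subsemiring_closed)
  have "feval (Suc d) (mul_monomial 1 0 0 C) (x, y, z) = x * f (x, y, z)"
    "feval (Suc d) (mul_monomial 0 1 0 C) (x, y, z) = y * f (x, y, z)"
    "feval (Suc d) (mul_monomial 0 0 1 C) (x, y, z) = z * f (x, y, z)" for x y z
    using feval_mul_monomial[of d 1 0 0 C x y z] feval_mul_monomial[of d 0 1 0 C x y z]
      feval_mul_monomial[of d 0 0 1 C x y z]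
    by (simp_all add: C(3))
  then have "(\<lambda>X. cdot l X * f X) = feval (Suc d) C'"
    by (auto simp: fun_eq_iff C'_def l_eq cdot_def feval_add feval_scale algebra_simps)
  with hom range show ?thesis unfolding form_fun_def by blast
qed

lemma form_fun_power_linear:
  "vec_in K l \<Longrightarrow> form_fun K d f \<Longrightarrow> form_fun K (n + d) (\<lambda>X. cdot l X ^ n * f X)"
proof (induction n)
  case (Suc n)
  then show ?case
    using form_fun_mul_linear[OF Suc.prems(1) Suc.IH[OF Suc.prems]] by (simp add: mult.assoc)
qed simp

lemma form_fun_compose:
  assumes C: "homogeneous d C" "range C \<subseteq> K" and r: "vec_in K r1" "vec_in K r2" "vec_in K r3"
  shows "form_fun K d (\<lambda>X. feval d C (cdot r1 X, cdot r2 X, cdot r3 X))"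
proof -
  have "form_fun K d (\<lambda>X. C (i, j, k) * (cdot r1 X ^ i * (cdot r2 X ^ j * (cdot r3 X ^ k * 1))))"
    if "(i, j, k) \<in> fmonos d" for i j k
  proof -
    have "form_fun K (i + (j + (k + 0))) (\<lambda>X. cdot r1 X ^ i * (cdot r2 X ^ j * (cdot r3 X ^ k * 1)))"
      by (intro form_fun_power_linear r form_fun_one)
    with that show ?thesis using C(2) by (intro form_fun_scale) (auto simp: fmonos_def add.assoc)
  qed
  then have "form_fun K d (\<lambda>X. \<Sum>(i, j, k)\<in>fmonos d.
      C (i, j, k) * (cdot r1 X ^ i * (cdot r2 X ^ j * (cdot r3 X ^ k * 1))))"
    by (intro form_fun_sum finite_fmonos) auto
  then show ?thesis by (simp add: feval_def mult.assoc)
qed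

end

section \<open>Reducible forms and roots on lines through (0 : 1 : 0)\<close>

lemma coeff_restr_vertical:
  "coeff (restr d G (p1, 0, p3) (0, 1, 0)) n =
     (\<Sum>(i, j, k)\<in>fmonos d. if j = n then G (i, j, k) * p1 ^ i * p3 ^ k else 0)"
proof -
  have "[:p1:] ^ i * [:0, 1:] ^ j * [:p3:] ^ k = monom (p1 ^ i * p3 ^ k) j" for i j k
    by (simp add: monom_altdef poly_const_pow smult_monom mult.commute)
  then show ?thesis
    unfolding restr_def prod.case coeff_sum
    by (intro sum.cong refl) (auto simp: coeff_monom)
qed

lemma degree_restr_vertical: "degree (restr d G (p1, 0, p3) (0, 1, 0)) \<le> d"
  by (rule degree_le) (auto simp: coeff_restr_vertical fmonos_def intro!: sum.neutral)

lemma lead_coeff_restr_vertical: "coeff (restr d G (p1, 0, p3) (0, 1, 0)) d = G (0, d, 0)"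
proof -
  have "coeff (restr d G (p1, 0, p3) (0, 1, 0)) d = (\<Sum>m\<in>fmonos d. if m = (0, d, 0) then G (0, d, 0) else 0)"
    unfolding coeff_restr_vertical by (intro sum.cong refl) (auto simp: fmonos_def split: if_splits)
  also have "\<dots> = G (0, d, 0)" by (subst sum.delta[OF finite_fmonos]) (simp add: fmonos_def)
  finally show ?thesis .
qed

lemma subleading_coeff_restr_vertical:
  assumes "1 \<le> d"
  shows "coeff (restr d G (p1, 0, p3) (0, 1, 0)) (d - 1) = G (1, d - 1, 0) * p1 + G (0, d - 1, 1) * p3"
proof -
  have "coeff (restr d G (p1, 0, p3) (0, 1, 0)) (d - 1) =
      (\<Sum>m\<in>fmonos d. (if m = (1, d - 1, 0) then G (1, d - 1, 0) * p1 else 0) +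
        (if m = (0, d - 1, 1) then G (0, d - 1, 1) * p3 else 0))"
    unfolding coeff_restr_vertical using assms
    by (intro sum.cong refl) (auto simp: fmonos_def split: if_splits)
  also have "\<dots> = G (1, d - 1, 0) * p1 + G (0, d - 1, 1) * p3"
    using assms by (simp add: sum.distrib finite_fmonos) (auto simp: fmonos_def)
  finally show ?thesis .
qed

lemma degree_prod_linear_factors_le: "degree (\<Prod>x\<in>#A. [:- x, 1:]) \<le> size A"
proof (induction A)
  case (add a A)
  then show ?case
    using degree_mult_le[of "[:- a, 1:]" "\<Prod>x\<in>#A. [:- x, 1:]"] by (simp del: mult_pCons_left)
qed simp

lemma coeff_prod_linear_factors:
  "coeff (\<Prod>x\<in>#A. [:- x, 1:]) (size A) = (1 :: 'a :: comm_ring_1)"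
  "1 \<le> size A \<Longrightarrow> coeff (\<Prod>x\<in>#A. [:- x, 1:]) (size A - 1) = - sum_mset (A :: 'a multiset)"
proof (induction A)
  case (add a A)
  let ?P = "\<Prod>x\<in>#A. [:- x, 1:]"
  have P: "(\<Prod>x\<in>#add_mset a A. [:- x, 1:]) = smult (- a) ?P + pCons 0 ?P" by simp
  { case 1 show ?case
      using add.IH(1) degree_prod_linear_factors_le[of A] unfolding P by (simp add: coeff_eq_0) }
  { case 2 show ?case using add.IH unfolding P by (cases "size A") (simp_all add: coeff_pCons) }
qed simp_all

lemma vertical_root_sum:
  assumes e: "1 \<le> e" and lead: "G (0, e, 0) \<noteq> 0"
  obtains R where "size R = e" "\<And>r. r \<in># R \<Longrightarrow> feval e G (p1, r, p3) = 0"
    "G (0, e, 0) * sum_mset R = - (G (1, e - 1, 0) * p1 + G (0, e - 1, 1) * p3)"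
proof
  define P where "P = restr e G (p1, 0, p3) (0, 1, 0)"
  have top: "coeff P e = G (0, e, 0)" unfolding P_def by (rule lead_coeff_restr_vertical)
  then have "e \<le> degree P" using lead by (intro le_degree) simp
  moreover have "degree P \<le> e" unfolding P_def by (rule degree_restr_vertical)
  ultimately have deg: "degree P = e" by simp
  with top have lc: "lead_coeff P = G (0, e, 0)" by simp
  show "size (proots P) = e" using deg by (simp add: size_proots_complex)
  have "P \<noteq> 0" using lc lead by auto
  show "feval e G (p1, r, p3) = 0" if "r \<in># proots P" for r
    using that \<open>P \<noteq> 0\<close> poly_restr[of e G p1 0 p3 0 1 0 r] by (simp add: P_def)
  have "P = smult (G (0, e, 0)) (\<Prod>x\<in>#proots P. [:- x, 1:])"
    using complex_poly_decompose_multiset[of P] lc by simp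
  then have "coeff P (e - 1) = G (0, e, 0) * - sum_mset (proots P)"
    using coeff_prod_linear_factors(2)[of "proots P"] deg e by (metis coeff_smult size_proots_complex)
  moreover have "coeff P (e - 1) = G (1, e - 1, 0) * p1 + G (0, e - 1, 1) * p3"
    unfolding P_def by (rule subleading_coeff_restr_vertical[OF e])
  ultimately show "G (0, e, 0) * sum_mset (proots P) = - (G (1, e - 1, 0) * p1 + G (0, e - 1, 1) * p3)"
    by (simp add: minus_equation_iff[of "G (0, e, 0) * _"])
qed

lemma sum_mset_congruent:
  assumes "\<And>r. r \<in># R \<Longrightarrow> \<exists>k::int. r = of_int (n * k) + c"
  shows "\<exists>k::int. sum_mset R = of_int (n * k) + of_nat (size R) * (c :: complex)"
  using assms
proof (induction R)
  case (add a R)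
  have "\<exists>k::int. sum_mset R = of_int (n * k) + of_nat (size R) * c"
    using add.prems by (intro add.IH) auto
  moreover have "\<exists>k::int. a = of_int (n * k) + c" using add.prems by simp
  ultimately obtain k k' where "sum_mset R = of_int (n * k) + of_nat (size R) * c" "a = of_int (n * k') + c"
    by blast
  then show ?case by (intro exI[of _ "k + k'"]) (simp add: algebra_simps)
qed simp

lemma vertical_root_sum_congruent:
  assumes "1 \<le> e" "G (0, e, 0) \<noteq> 0"
    and roots: "\<And>r. feval e G (p1, r, p3) = 0 \<Longrightarrow> \<exists>k::int. r = of_int (n * k) + c"
  shows "\<exists>k::int. G (0, e, 0) * (of_int (n * k) + of_nat e * c) = - (G (1, e - 1, 0) * p1 + G (0, e - 1, 1) * p3)"
proof -
  obtain R where R: "size R = e" "\<And>r. r \<in># R \<Longrightarrow> feval e G (p1, r, p3) = 0"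
    "G (0, e, 0) * sum_mset R = - (G (1, e - 1, 0) * p1 + G (0, e - 1, 1) * p3)"
    using vertical_root_sum[where G = G, OF assms(1,2)] by blast
  obtain k :: int where "sum_mset R = of_int (n * k) + of_nat (size R) * c"
    using sum_mset_congruent[of R n c] R(2) roots by blast
  with R show ?thesis by auto
qed

(* Unlike in irreducible_form, the factors need only be homogeneous, not nonzero. This is the
   notion that transfers along coordinate changes without first proving that a form vanishing
   everywhere has zero coefficients. *)

definition reducible_form :: "nat \<Rightarrow> tform \<Rightarrow> bool" where
  "reducible_form d F \<longleftrightarrow> (\<exists>d1 d2 G H. 1 \<le> d1 \<and> 1 \<le> d2 \<and> d1 + d2 = d \<and>
     homogeneous d1 G \<and> homogeneous d2 H \<and> (\<forall>x. feval d F x = feval d1 G x * feval d2 H x))"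

lemma irreducible_formI: "is_form d F \<Longrightarrow> \<not> reducible_form d F \<Longrightarrow> irreducible_form d F"
  unfolding irreducible_form_def reducible_form_def is_form_def homogeneous_def by blast

section \<open>The model sextic\<close>

definition model_sextic :: tform where
  "model_sextic m = of_int (case map_of
     [((0,6,0), 1), ((0,5,1), 12), ((0,4,2), -108), ((0,3,3), -864), ((0,2,4), 5184),
      ((1,5,0), -18), ((1,4,1), -57), ((1,3,2), 1960), ((1,2,3), -1956), ((1,1,4), -28944),
      ((1,0,5), 9135),
      ((2,4,0), 108), ((2,3,1), -612), ((2,2,2), -5481), ((2,1,3), 40980), ((2,0,4), -7910),
      ((3,3,0), -216), ((3,2,1), 3132), ((3,1,2), -14346)] m of Some c \<Rightarrow> c | None \<Rightarrow> 0)"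

lemma feval_model_sextic:
  "feval 6 model_sextic (x, y, z) =
     y^6 + 12 * y^5 * z - 108 * y^4 * z^2 - 864 * y^3 * z^3 + 5184 * y^2 * z^4
     + x * (- 18 * y^5 - 57 * y^4 * z + 1960 * y^3 * z^2 - 1956 * y^2 * z^3 - 28944 * y * z^4 + 9135 * z^5)
     + x^2 * (108 * y^4 - 612 * y^3 * z - 5481 * y^2 * z^2 + 40980 * y * z^3 - 7910 * z^4)
     + x^3 * (- 216 * y^3 + 3132 * y^2 * z - 14346 * y * z^2)"
  by (simp add: feval_eq_double_sum model_sextic_def eval_nat_numeral algebra_simps)

lemma homogeneous_model_sextic: "homogeneous 6 model_sextic"
  unfolding homogeneous_def by (auto simp: fmonos_def model_sextic_def)

lemma model_sextic_on_D: "feval 6 model_sextic (0, y, z) = y^2 * (y + 12 * z)^2 * (y - 6 * z)^2"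
  by (simp add: feval_model_sextic algebra_simps power2_eq_square power3_eq_cube power_numeral_reduce)

lemma model_sextic_on_L: "feval 6 model_sextic (x, y, x) = (y + 5 * x)^2 * (y - x)^2 * (y - 7 * x)^2"
  by (simp add: feval_model_sextic algebra_simps power2_eq_square power3_eq_cube power_numeral_reduce)

lemma model_sextic_on_T: "feval 6 model_sextic (x, y, 0) = y^3 * (y - 6 * x)^3"
  by (simp add: feval_model_sextic algebra_simps power2_eq_square power3_eq_cube power_numeral_reduce)

lemmas model_sextic_eval = feval_eq_double_sum form_deriv_def model_sextic_def eval_nat_numeral

lemma mult_model_sextic_T:
  "mult_at 6 model_sextic (1, 0, 0) = 3" "mult_at 6 model_sextic (1, 6, 0) = 3"
  by (rule mult_at_eqI[where v = "(0, 1, 0)"]; simp add: model_sextic_eval less_Suc_eq)+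

lemma mult_model_sextic_L:
  "mult_at 6 model_sextic (1, -5, 1) = 2" "mult_at 6 model_sextic (1, 1, 1) = 2"
  "mult_at 6 model_sextic (1, 7, 1) = 2"
  by (rule mult_at_eqI[where v = "(0, 1, 0)"]; simp add: model_sextic_eval less_Suc_eq)+

lemma mult_model_sextic_D:
  "mult_at 6 model_sextic (0, -12, 1) = 1" "mult_at 6 model_sextic (0, 0, 1) = 1"
  "mult_at 6 model_sextic (0, 6, 1) = 1"
  by (rule mult_at_eqI[where v = "(1, 0, 0)"]; simp add: model_sextic_eval)+

lemma tangent_model_sextic_D:
  "tangent_at 6 model_sextic (1, 0, 0) (0, -12, 1)" "tangent_at 6 model_sextic (1, 0, 0) (0, 0, 1)"
  "tangent_at 6 model_sextic (1, 0, 0) (0, 6, 1)"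
  by (rule tangent_atI; simp add: form_grad_def vscale_def model_sextic_eval)+

lemma meets_model_D: "meets_in 6 model_sextic (1, 0, 0) {(0, -12, 1), (0, 0, 1), (0, 6, 1)}"
proof -
  have "\<exists>p\<in>{(0, -12, 1), (0, 0, 1), (0, 6, 1)}. proj_eq p q"
    if hq: "nonzero q" "on_line (1, 0, 0) q" "feval 6 model_sextic q = 0" for q
  proof -
    obtain y z where q: "q = (0, y, z)" using hq(2) by (cases q) (auto simp: on_line_def cdot_def)
    have "y = -12 * z \<or> y = 0 \<or> y = 6 * z"
      using hq(3) by (auto simp: q model_sextic_on_D add_eq_0_iff2)
    moreover from this have "z \<noteq> 0" using hq(1) by (auto simp: q nonzero_def)
    ultimately show ?thesis by (auto simp: q proj_eq_def vscale_def intro!: exI[of _ z])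
  qed
  then show ?thesis
    unfolding meets_in_def
    by (auto simp: nonzero_def on_line_def cdot_def model_sextic_on_D proj_eq_def vscale_def)
qed

lemma meets_model_L: "meets_in 6 model_sextic (1, 0, -1) {(1, -5, 1), (1, 1, 1), (1, 7, 1)}"
proof -
  have "\<exists>p\<in>{(1, -5, 1), (1, 1, 1), (1, 7, 1)}. proj_eq p q"
    if hq: "nonzero q" "on_line (1, 0, -1) q" "feval 6 model_sextic q = 0" for q
  proof -
    obtain x y where q: "q = (x, y, x)" using hq(2) by (cases q) (auto simp: on_line_def cdot_def)
    have "y = -5 * x \<or> y = x \<or> y = 7 * x"
      using hq(3) by (auto simp: q model_sextic_on_L add_eq_0_iff2)
    moreover from this have "x \<noteq> 0" using hq(1) by (auto simp: q nonzero_def)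
    ultimately show ?thesis by (auto simp: q proj_eq_def vscale_def intro!: exI[of _ x])
  qed
  then show ?thesis
    unfolding meets_in_def
    by (auto simp: nonzero_def on_line_def cdot_def model_sextic_on_L[where x = 1, simplified] proj_eq_def vscale_def)
qed

lemma meets_model_T: "meets_in 6 model_sextic (0, 0, 1) {(1, 0, 0), (1, 6, 0)}"
proof -
  have "\<exists>p\<in>{(1, 0, 0), (1, 6, 0)}. proj_eq p q"
    if hq: "nonzero q" "on_line (0, 0, 1) q" "feval 6 model_sextic q = 0" for q
  proof -
    obtain x y where q: "q = (x, y, 0)" using hq(2) by (cases q) (auto simp: on_line_def cdot_def)
    have "y = 0 \<or> y = 6 * x"
      using hq(3) by (auto simp: q model_sextic_on_T)
    moreover from this have "x \<noteq> 0" using hq(1) by (auto simp: q nonzero_def)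
    ultimately show ?thesis by (auto simp: q proj_eq_def vscale_def intro!: exI[of _ x])
  qed
  then show ?thesis
    unfolding meets_in_def
    by (auto simp: nonzero_def on_line_def cdot_def model_sextic_on_T[where x = 1, simplified] proj_eq_def vscale_def)
qed

lemma model_sextic_roots_D: "feval 6 model_sextic (0, r, 1) = 0 \<Longrightarrow> \<exists>k::int. r = of_int (6 * k) + 0"
  using model_sextic_on_D[of r 1]
  by (auto simp: add_eq_0_iff2 intro: exI[of _ "-2"] exI[of _ 0] exI[of _ 1])

lemma model_sextic_roots_T: "feval 6 model_sextic (1, r, 0) = 0 \<Longrightarrow> \<exists>k::int. r = of_int (6 * k) + 0"
  using model_sextic_on_T[of 1 r] by (auto intro: exI[of _ 0] exI[of _ 1])

lemma model_sextic_roots_L: "feval 6 model_sextic (1, r, 1) = 0 \<Longrightarrow> \<exists>k::int. r = of_int (6 * k) + 1"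
  using model_sextic_on_L[of 1 r]
  by (auto simp: add_eq_0_iff2 intro: exI[of _ "-1"] exI[of _ 0] exI[of _ 1])

lemma not_reducible_model_sextic: "\<not> reducible_form 6 model_sextic"
proof
  assume "reducible_form 6 model_sextic"
  then obtain d1 d2 G H where d: "1 \<le> d1" "1 \<le> d2" "d1 + d2 = 6"
    and fac: "\<And>x. feval 6 model_sextic x = feval d1 G x * feval d2 H x"
    unfolding reducible_form_def by blast
  have lead: "G (0, d1, 0) \<noteq> 0"
    using fac[of "(0, 1, 0)"] by (auto simp: feval_0_1_0 model_sextic_def)
  note root_sum = vertical_root_sum_congruent[where G = G, OF d(1) lead]
  obtain kD :: int where kD: "G (0, d1, 0) * of_int (6 * kD) = - G (0, d1 - 1, 1)"
    using root_sum[of 0 1 6 0] model_sextic_roots_D fac by force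
  obtain kT :: int where kT: "G (0, d1, 0) * of_int (6 * kT) = - G (1, d1 - 1, 0)"
    using root_sum[of 1 0 6 0] model_sextic_roots_T fac by force
  obtain kL :: int where kL: "G (0, d1, 0) * (of_int (6 * kL) + of_nat d1) = - (G (1, d1 - 1, 0) + G (0, d1 - 1, 1))"
    using root_sum[of 1 1 6 1] model_sextic_roots_L fac by force
  have "G (0, d1, 0) * of_int (6 * kL + int d1) = G (0, d1, 0) * of_int (6 * kD + 6 * kT)"
    using kD kT kL by (simp add: algebra_simps)
  then have "(of_int (6 * kL + int d1) :: complex) = of_int (6 * kD + 6 * kT)"
    using lead mult_left_cancel by blast
  then have "6 * kL + int d1 = 6 * kD + 6 * kT" by (simp only: of_int_eq_iff)
  then show False using d by presburger
qed

definition sextic_config ::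
    "tform \<Rightarrow> cvec \<Rightarrow> cvec \<Rightarrow> cvec \<Rightarrow> cvec \<Rightarrow> cvec set \<Rightarrow> cvec set \<Rightarrow> cvec set \<Rightarrow> bool" where
  "sextic_config F D L T a PD PL PT \<longleftrightarrow>
     is_form 6 F \<and> \<not> reducible_form 6 F \<and> feval 6 F a \<noteq> 0 \<and>
     meets_in 6 F D PD \<and> card PD = 3 \<and> (\<forall>p\<in>PD. mult_at 6 F p = 1 \<and> tangent_at 6 F D p) \<and>
     meets_in 6 F L PL \<and> card PL = 3 \<and> (\<forall>p\<in>PL. mult_at 6 F p = 2) \<and>
     meets_in 6 F T PT \<and> card PT = 2 \<and> (\<forall>p\<in>PT. mult_at 6 F p = 3)"

lemma sextic_config_model:
  "sextic_config model_sextic (1, 0, 0) (1, 0, -1) (0, 0, 1) (0, 1, 0)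
     {(0, -12, 1), (0, 0, 1), (0, 6, 1)} {(1, -5, 1), (1, 1, 1), (1, 7, 1)} {(1, 0, 0), (1, 6, 0)}"
proof -
  have "is_form 6 model_sextic"
    using homogeneous_model_sextic unfolding is_form_def homogeneous_def
    by (auto intro: exI[of _ "(0, 6, 0)"] simp: model_sextic_def)
  then show ?thesis
    unfolding sextic_config_def
    using not_reducible_model_sextic meets_model_D meets_model_L meets_model_T
      mult_model_sextic_D mult_model_sextic_L mult_model_sextic_T tangent_model_sextic_D
    by (simp add: feval_model_sextic)
qed

section \<open>Linear changes of coordinates\<close>

definition lin :: "cvec \<Rightarrow> cvec \<Rightarrow> cvec \<Rightarrow> cvec \<Rightarrow> cvec" where
  "lin r1 r2 r3 X = (cdot r1 X, cdot r2 X, cdot r3 X)"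

lemma lin_vscale: "lin r1 r2 r3 (vscale c X) = vscale c (lin r1 r2 r3 X)"
  unfolding lin_def cdot_vscale_right by (simp add: vscale_def)

lemma lin_zero: "lin r1 r2 r3 (0, 0, 0) = (0, 0, 0)"
  by (cases r1; cases r2; cases r3) (simp add: lin_def cdot_def)

lemma lin_line: "lin r1 r2 r3 (p1 + t * v1, p2 + t * v2, p3 + t * v3) =
    (case lin r1 r2 r3 (p1, p2, p3) of (q1, q2, q3) \<Rightarrow> case lin r1 r2 r3 (v1, v2, v3) of (w1, w2, w3) \<Rightarrow>
      (q1 + t * w1, q2 + t * w2, q3 + t * w3))"
  by (cases r1; cases r2; cases r3) (simp add: lin_def cdot_def algebra_simps)

locale coord_change =
  fixes r1 r2 r3 s1 s2 s3 :: cvec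
  assumes lin_left_inverse: "\<And>X. lin s1 s2 s3 (lin r1 r2 r3 X) = X"
    and lin_right_inverse: "\<And>X. lin r1 r2 r3 (lin s1 s2 s3 X) = X"
begin

abbreviation \<psi> where "\<psi> \<equiv> lin r1 r2 r3"
abbreviation \<phi> where "\<phi> \<equiv> lin s1 s2 s3"

lemma inj_\<phi>: "inj \<phi>"
  by (metis injI lin_right_inverse)

lemma nonzero_\<phi>: "nonzero (\<phi> X) \<longleftrightarrow> nonzero X"
  unfolding nonzero_def by (metis lin_zero lin_right_inverse)

lemma nonzero_\<psi>: "nonzero (\<psi> X) \<longleftrightarrow> nonzero X"
  unfolding nonzero_def by (metis lin_zero lin_left_inverse)

context
  fixes d :: nat and F F' :: tform
  assumes F': "\<And>X. feval d F' X = feval d F (\<psi> X)"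
begin

lemma restr_comp: "restr d F' p v = restr d F (\<psi> p) (\<psi> v)"
proof -
  obtain p1 p2 p3 where p: "p = (p1, p2, p3)" by (cases p)
  obtain v1 v2 v3 where v: "v = (v1, v2, v3)" by (cases v)
  obtain q1 q2 q3 where q: "\<psi> p = (q1, q2, q3)" by (cases "\<psi> p")
  obtain w1 w2 w3 where w: "\<psi> v = (w1, w2, w3)" by (cases "\<psi> v")
  show ?thesis
    unfolding q w unfolding p v by (rule restr_eqI) (use q w in \<open>simp add: F' lin_line p v\<close>)
qed

lemma mult_at_comp: "mult_at d F' p = mult_at d F (\<psi> p)"
proof -
  have "(\<exists>v. coeff (restr d F' p v) m \<noteq> 0) \<longleftrightarrow> (\<exists>w. coeff (restr d F (\<psi> p) w) m \<noteq> 0)" for m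
    unfolding restr_comp by (metis lin_right_inverse)
  then show ?thesis unfolding mult_at_def by simp
qed

lemma tangent_at_comp:
  assumes "\<And>X. on_line l' X \<longleftrightarrow> on_line l (\<psi> X)"
  shows "tangent_at d F' l' p \<longleftrightarrow> tangent_at d F l (\<psi> p)"
  unfolding tangent_at_def restr_comp assms by (metis lin_right_inverse)

lemma meets_in_comp:
  assumes l: "\<And>X. on_line l' X \<longleftrightarrow> on_line l (\<psi> X)" and P: "meets_in d F l P"
  shows "meets_in d F' l' (\<phi> ` P)"
proof -
  from P have P_on: "\<And>p. p \<in> P \<Longrightarrow> nonzero p \<and> on_line l p \<and> feval d F p = 0"
    and P_distinct: "\<And>p q. p \<in> P \<Longrightarrow> q \<in> P \<Longrightarrow> proj_eq p q \<Longrightarrow> p = q"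
    and P_all: "\<And>q. nonzero q \<Longrightarrow> on_line l q \<Longrightarrow> feval d F q = 0 \<Longrightarrow> \<exists>p\<in>P. proj_eq p q"
    unfolding meets_in_def by blast+
  have "\<forall>p\<in>\<phi> ` P. nonzero p \<and> on_line l' p \<and> feval d F' p = 0"
    using P_on by (auto simp: F' l lin_right_inverse nonzero_\<phi>)
  moreover have "p = q" if "p \<in> \<phi> ` P" "q \<in> \<phi> ` P" "proj_eq p q" for p q
  proof -
    obtain p' q' c where pq: "p' \<in> P" "q' \<in> P" "p = \<phi> p'" "q = \<phi> q'" "c \<noteq> 0" "q = vscale c p"
      using \<open>p \<in> \<phi> ` P\<close> \<open>q \<in> \<phi> ` P\<close> \<open>proj_eq p q\<close> unfolding proj_eq_def by blast
    then have "q' = vscale c p'" by (metis lin_right_inverse lin_vscale)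
    with pq have "p' = q'" by (intro P_distinct) (auto simp: proj_eq_def)
    with pq show "p = q" by simp
  qed
  moreover have "\<exists>p\<in>\<phi> ` P. proj_eq p q" if "nonzero q" "on_line l' q" "feval d F' q = 0" for q
  proof -
    obtain p c where p: "p \<in> P" "c \<noteq> 0" "\<psi> q = vscale c p"
      using P_all[of "\<psi> q"] \<open>nonzero q\<close> \<open>on_line l' q\<close> \<open>feval d F' q = 0\<close>
      by (auto simp: F' l nonzero_\<psi> proj_eq_def)
    then have "q = vscale c (\<phi> p)" by (metis lin_left_inverse lin_vscale)
    with p show ?thesis unfolding proj_eq_def by blast
  qed
  ultimately show ?thesis unfolding meets_in_def by blast
qed

lemma reducible_form_comp:
  assumes "reducible_form d F'"
  shows "reducible_form d F"
proof -
  obtain d1 d2 G H where d: "1 \<le> d1" "1 \<le> d2" "d1 + d2 = d" and GH: "homogeneous d1 G" "homogeneous d2 H"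
    and fac: "\<And>X. feval d F' X = feval d1 G X * feval d2 H X"
    using assms unfolding reducible_form_def by blast
  have K: "complex_subsemiring UNIV" by (simp add: complex_subsemiring_def)
  have s: "vec_in UNIV s1" "vec_in UNIV s2" "vec_in UNIV s3" by (auto simp: vec_in_def split: prod.splits)
  obtain G' where G': "homogeneous d1 G'" "feval d1 G' = (\<lambda>X. feval d1 G (\<phi> X))"
    using form_fun_compose[OF K GH(1) _ s] unfolding form_fun_def lin_def by auto
  obtain H' where H': "homogeneous d2 H'" "feval d2 H' = (\<lambda>X. feval d2 H (\<phi> X))"
    using form_fun_compose[OF K GH(2) _ s] unfolding form_fun_def lin_def by auto
  have "feval d F X = feval d1 G' X * feval d2 H' X" for X
    using F'[of "\<phi> X"] fac[of "\<phi> X"] G'(2) H'(2) by (simp add: lin_right_inverse)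
  with d G'(1) H'(1) show ?thesis unfolding reducible_form_def by blast
qed

end

lemma sextic_config_comp:
  assumes config: "sextic_config F D L T a PD PL PT"
    and F': "homogeneous 6 F'" "\<And>X. feval 6 F' X = feval 6 F (\<psi> X)"
    and D: "\<And>X. on_line D' X \<longleftrightarrow> on_line D (\<psi> X)"
    and L: "\<And>X. on_line L' X \<longleftrightarrow> on_line L (\<psi> X)"
    and T: "\<And>X. on_line T' X \<longleftrightarrow> on_line T (\<psi> X)"
    and a: "\<psi> a' = vscale c a" "c \<noteq> 0"
  shows "sextic_config F' D' L' T' a' (\<phi> ` PD) (\<phi> ` PL) (\<phi> ` PT)"
proof -
  have fa: "feval 6 F' a' \<noteq> 0"
    using config a by (simp add: F'(2) feval_vscale sextic_config_def)
  have "\<exists>m. F' m \<noteq> 0"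
  proof (rule ccontr)
    assume "\<nexists>m. F' m \<noteq> 0"
    then have "feval 6 F' a' = 0" by (cases a') (simp add: feval_def)
    with fa show False by simp
  qed
  with F'(1) have "is_form 6 F'" unfolding is_form_def homogeneous_def by blast
  moreover have "\<not> reducible_form 6 F'"
    using config reducible_form_comp[OF F'(2)] unfolding sextic_config_def by blast
  moreover have "card (\<phi> ` P) = card P" for P
    by (rule card_image) (use inj_\<phi> in \<open>auto intro: inj_on_subset\<close>)
  ultimately show ?thesis
    using config fa
      meets_in_comp[OF F'(2) D] meets_in_comp[OF F'(2) L] meets_in_comp[OF F'(2) T]
    unfolding sextic_config_def
    by (simp add: mult_at_comp[OF F'(2)] tangent_at_comp[OF F'(2) D] lin_right_inverse)
qed

end

section \<open>Three concurrent lines in normal position\<close>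

definition cross :: "cvec \<Rightarrow> cvec \<Rightarrow> cvec" where
  "cross u w = (case u of (x1, x2, x3) \<Rightarrow> case w of (y1, y2, y3) \<Rightarrow>
     (x2 * y3 - x3 * y2, x3 * y1 - x1 * y3, x1 * y2 - x2 * y1))"

lemma cdot_cramer:
  "cdot e (cross D T) * cdot L X =
     cdot L (cross T e) * cdot D X + cdot D (cross L e) * cdot T X + cdot L (cross D T) * cdot e X"
  by (cases e; cases D; cases T; cases L; cases X) (simp add: cdot_def cross_def algebra_simps)

lemma proj_eq_if_cdot_proportional:
  assumes "\<And>X. cdot L X = c * cdot T X" and "nonzero L"
  shows "proj_eq T L"
proof -
  have "L = vscale c T"
    using assms(1)[of "(1, 0, 0)"] assms(1)[of "(0, 1, 0)"] assms(1)[of "(0, 0, 1)"]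
    by (cases L; cases T) (simp add: cdot_def vscale_def)
  moreover from this have "c \<noteq> 0" using assms(2) by (cases T) (auto simp: nonzero_def vscale_def)
  ultimately show ?thesis unfolding proj_eq_def by blast
qed

lemma cross_eq_0_imp_proportional:
  assumes "cross x y = (0, 0, 0)" and "nonzero y"
  shows "\<exists>k. x = vscale k y"
proof -
  obtain x1 x2 x3 where x: "x = (x1, x2, x3)" by (cases x)
  obtain y1 y2 y3 where y: "y = (y1, y2, y3)" by (cases y)
  have e: "x2 * y3 = x3 * y2" "x3 * y1 = x1 * y3" "x1 * y2 = x2 * y1"
    using assms(1) unfolding x y cross_def by auto
  consider "y1 \<noteq> 0" | "y2 \<noteq> 0" | "y3 \<noteq> 0" using assms(2) y by (auto simp: nonzero_def)
  then show ?thesis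
  proof cases
    case 1 with e show ?thesis by (intro exI[of _ "x1 / y1"]) (simp add: x y vscale_def field_simps)
  next
    case 2 with e show ?thesis by (intro exI[of _ "x2 / y2"]) (simp add: x y vscale_def field_simps)
  next
    case 3 with e show ?thesis by (intro exI[of _ "x3 / y3"]) (simp add: x y vscale_def field_simps)
  qed
qed

lemma cross_common_point:
  assumes "nonzero D" "nonzero T" "\<not> proj_eq D T" and a: "on_line D a" "on_line T a" "nonzero a"
  obtains k where "cross D T = vscale k a" "k \<noteq> 0"
proof -
  have "nonzero (cross D T)"
  proof (rule ccontr)
    assume "\<not> nonzero (cross D T)"
    then have "cross D T = (0, 0, 0)" by (simp add: nonzero_def)
    then obtain k where k: "D = vscale k T" using cross_eq_0_imp_proportional assms(2) by blast
    then have "\<And>X. cdot D X = k * cdot T X" by (simp add: cdot_vscale_left)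
    then show False using assms(1,3) proj_eq_sym proj_eq_if_cdot_proportional by blast
  qed
  moreover have "cross (cross D T) a = (0, 0, 0)"
  proof -
    obtain d1 d2 d3 t1 t2 t3 where DT: "D = (d1, d2, d3)" "T = (t1, t2, t3)" by (cases D; cases T)
    have "cross (cross D T) a = (t1 * cdot D a - d1 * cdot T a, t2 * cdot D a - d2 * cdot T a,
        t3 * cdot D a - d3 * cdot T a)"
      by (cases a) (simp add: DT cdot_def cross_def algebra_simps)
    with a show ?thesis by (simp add: on_line_def)
  qed
  then obtain k where k: "cross D T = vscale k a" using cross_eq_0_imp_proportional a(3) by blast
  with \<open>nonzero (cross D T)\<close> have "k \<noteq> 0" by (cases a) (auto simp: nonzero_def vscale_def)
  with k show ?thesis by (rule that)
qed

lemma coordinate_functional: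
  assumes "nonzero a"
  obtains e where "rat_vec e" "cdot e a \<noteq> 0"
proof -
  obtain a1 a2 a3 where a: "a = (a1, a2, a3)" by (cases a)
  consider "a1 \<noteq> 0" | "a2 \<noteq> 0" | "a3 \<noteq> 0" using assms a by (auto simp: nonzero_def)
  then show ?thesis
  proof cases
    case 1 then show ?thesis by (intro that[of "(1, 0, 0)"]) (simp_all add: a rat_vec_def cdot_def)
  next
    case 2 then show ?thesis by (intro that[of "(0, 1, 0)"]) (simp_all add: a rat_vec_def cdot_def)
  next
    case 3 then show ?thesis by (intro that[of "(0, 0, 1)"]) (simp_all add: a rat_vec_def cdot_def)
  qed
qed

lemma concurrent_line_in_pencil:
  assumes "nonzero D" "nonzero L" "nonzero T" "nonzero a"
    and "\<not> proj_eq D L" "\<not> proj_eq D T" "\<not> proj_eq L T"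
    and "on_line D a" "on_line L a" "on_line T a"
  obtains \<alpha> \<beta> where "\<And>X. cdot L X = \<alpha> * cdot D X + \<beta> * cdot T X" "\<alpha> \<noteq> 0" "\<beta> \<noteq> 0"
    "rat_vec D \<Longrightarrow> rat_vec L \<Longrightarrow> rat_vec T \<Longrightarrow> \<alpha> \<in> \<rat> \<and> \<beta> \<in> \<rat>"
proof -
  obtain e where e: "rat_vec e" "cdot e a \<noteq> 0" using coordinate_functional[OF assms(4)] by blast
  obtain k where k: "cross D T = vscale k a" "k \<noteq> 0"
    using cross_common_point assms(1,3,6,8,10,4) by blast
  define \<delta> where "\<delta> = cdot e (cross D T)"
  define \<alpha> where "\<alpha> = cdot L (cross T e) / \<delta>"
  define \<beta> where "\<beta> = cdot D (cross L e) / \<delta>"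
  have \<delta>: "\<delta> \<noteq> 0" using e k by (simp add: \<delta>_def cdot_vscale_right)
  have "cdot L (cross D T) = 0" using k assms(9) by (simp add: cdot_vscale_right on_line_def)
  then have comb: "cdot L X = \<alpha> * cdot D X + \<beta> * cdot T X" for X
    using cdot_cramer[of e D T L X] \<delta> by (simp add: \<alpha>_def \<beta>_def \<delta>_def field_simps)
  show ?thesis
  proof (rule that[OF comb])
    show "\<alpha> \<noteq> 0"
    proof
      assume "\<alpha> = 0"
      with comb have "proj_eq T L" by (intro proj_eq_if_cdot_proportional[of L \<beta> T, OF _ assms(2)]) simp
      with assms(7) proj_eq_sym show False by blast
    qed
    show "\<beta> \<noteq> 0"
    proof
      assume "\<beta> = 0"
      with comb have "proj_eq D L" by (intro proj_eq_if_cdot_proportional[of L \<alpha> D, OF _ assms(2)]) simp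
      with assms(5) show False by blast
    qed
    show "\<alpha> \<in> \<rat> \<and> \<beta> \<in> \<rat>" if "rat_vec D" "rat_vec L" "rat_vec T"
      using that e(1) by (cases D; cases L; cases T; cases e)
        (simp add: \<alpha>_def \<beta>_def \<delta>_def rat_vec_def cdot_def cross_def)
  qed
qed

lemma lin_vscale_rows: "lin (vscale c t1) (vscale c t2) (vscale c t3) X = vscale c (lin t1 t2 t3 X)"
  unfolding lin_def cdot_vscale_left by (simp add: vscale_def)

lemma coord_change_exists:
  assumes "cdot r1 (cross r2 r3) \<noteq> 0"
  obtains s1 s2 s3 where "coord_change r1 r2 r3 s1 s2 s3"
    "rat_vec r1 \<Longrightarrow> rat_vec r2 \<Longrightarrow> rat_vec r3 \<Longrightarrow> rat_vec s1 \<and> rat_vec s2 \<and> rat_vec s3"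
proof -
  obtain a1 a2 a3 b1 b2 b3 c1 c2 c3 where r: "r1 = (a1, a2, a3)" "r2 = (b1, b2, b3)" "r3 = (c1, c2, c3)"
    by (cases r1; cases r2; cases r3)
  define \<Delta> where "\<Delta> = cdot r1 (cross r2 r3)"
  \<comment> \<open>the rows of the adjugate matrix of (r1; r2; r3)\<close>
  define t1 where "t1 = (b2 * c3 - b3 * c2, c2 * a3 - c3 * a2, a2 * b3 - a3 * b2)"
  define t2 where "t2 = (b3 * c1 - b1 * c3, c3 * a1 - c1 * a3, a3 * b1 - a1 * b3)"
  define t3 where "t3 = (b1 * c2 - b2 * c1, c1 * a2 - c2 * a1, a1 * b2 - a2 * b1)"
  have adj: "lin r1 r2 r3 (lin t1 t2 t3 X) = vscale \<Delta> X" "lin t1 t2 t3 (lin r1 r2 r3 X) = vscale \<Delta> X" for X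
    by (cases X; simp add: \<Delta>_def t1_def t2_def t3_def r lin_def cdot_def cross_def vscale_def algebra_simps)+
  have "coord_change r1 r2 r3 (vscale (1 / \<Delta>) t1) (vscale (1 / \<Delta>) t2) (vscale (1 / \<Delta>) t3)"
    using assms by unfold_locales (simp_all add: lin_vscale_rows lin_vscale adj vscale_vscale vscale_1 \<Delta>_def)
  moreover have "rat_vec (vscale (1 / \<Delta>) t1) \<and> rat_vec (vscale (1 / \<Delta>) t2) \<and> rat_vec (vscale (1 / \<Delta>) t3)"
    if "rat_vec r1" "rat_vec r2" "rat_vec r3"
    using that by (simp add: \<Delta>_def t1_def t2_def t3_def r rat_vec_def vscale_def cdot_def cross_def)
  ultimately show ?thesis using that by blast
qed

lemma concurrent_lines_coords_vec:
  assumes "nonzero D" "nonzero L" "nonzero T" "nonzero a"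
    and "\<not> proj_eq D L" "\<not> proj_eq D T" "\<not> proj_eq L T"
    and "on_line D a" "on_line L a" "on_line T a"
  obtains r1 r2 r3 s1 s2 s3 c where "coord_change r1 r2 r3 s1 s2 s3"
    "\<And>X. on_line D X \<longleftrightarrow> on_line (1, 0, 0) (lin r1 r2 r3 X)"
    "\<And>X. on_line L X \<longleftrightarrow> on_line (1, 0, -1) (lin r1 r2 r3 X)"
    "\<And>X. on_line T X \<longleftrightarrow> on_line (0, 0, 1) (lin r1 r2 r3 X)"
    "lin r1 r2 r3 a = vscale c (0, 1, 0)" "c \<noteq> 0"
    "rat_vec D \<Longrightarrow> rat_vec L \<Longrightarrow> rat_vec T \<Longrightarrow>
       rat_vec r1 \<and> rat_vec r2 \<and> rat_vec r3 \<and> rat_vec s1 \<and> rat_vec s2 \<and> rat_vec s3"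
proof -
  obtain \<alpha> \<beta> where comb: "\<And>X. cdot L X = \<alpha> * cdot D X + \<beta> * cdot T X" and \<alpha>\<beta>: "\<alpha> \<noteq> 0" "\<beta> \<noteq> 0"
    and rat_\<alpha>\<beta>: "rat_vec D \<Longrightarrow> rat_vec L \<Longrightarrow> rat_vec T \<Longrightarrow> \<alpha> \<in> \<rat> \<and> \<beta> \<in> \<rat>"
    using concurrent_line_in_pencil[OF assms] by blast
  obtain e where e: "rat_vec e" "cdot e a \<noteq> 0" using coordinate_functional[OF assms(4)] by blast
  obtain k where k: "cross D T = vscale k a" "k \<noteq> 0"
    using cross_common_point assms(1,3,6,8,10,4) by blast
  define r1 where "r1 = vscale \<alpha> D"
  define r3 where "r3 = vscale (- \<beta>) T"
  have "cdot r1 (cross e r3) = \<alpha> * \<beta> * cdot e (cross D T)"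
    by (cases D; cases T; cases e) (simp add: r1_def r3_def cdot_def cross_def vscale_def algebra_simps)
  then have "cdot r1 (cross e r3) \<noteq> 0" using \<alpha>\<beta> k e(2) by (simp add: cdot_vscale_right)
  then obtain s1 s2 s3 where cc: "coord_change r1 e r3 s1 s2 s3"
    and rat_s: "rat_vec r1 \<Longrightarrow> rat_vec e \<Longrightarrow> rat_vec r3 \<Longrightarrow> rat_vec s1 \<and> rat_vec s2 \<and> rat_vec s3"
    using coord_change_exists by blast
  have \<psi>: "lin r1 e r3 X = (\<alpha> * cdot D X, cdot e X, - \<beta> * cdot T X)" for X
    by (simp add: lin_def r1_def r3_def cdot_vscale_left)
  show ?thesis
  proof (rule that[OF cc])
    show "on_line D X \<longleftrightarrow> on_line (1, 0, 0) (lin r1 e r3 X)" for X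
      using \<alpha>\<beta> by (simp add: \<psi> on_line_def cdot_def)
    show "on_line L X \<longleftrightarrow> on_line (1, 0, -1) (lin r1 e r3 X)" for X
      unfolding on_line_def comb by (simp add: \<psi> cdot_def)
    show "on_line T X \<longleftrightarrow> on_line (0, 0, 1) (lin r1 e r3 X)" for X
      using \<alpha>\<beta> by (simp add: \<psi> on_line_def cdot_def)
    show "lin r1 e r3 a = vscale (cdot e a) (0, 1, 0)"
      using assms(8,10) by (simp add: \<psi> on_line_def vscale_def)
    show "cdot e a \<noteq> 0" by (fact e(2))
    show "rat_vec r1 \<and> rat_vec e \<and> rat_vec r3 \<and> rat_vec s1 \<and> rat_vec s2 \<and> rat_vec s3"
      if "rat_vec D" "rat_vec L" "rat_vec T"
    proof -
      have "rat_vec r1" "rat_vec r3"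
        using that rat_\<alpha>\<beta>[OF that] by (cases D; cases T; simp add: r1_def r3_def rat_vec_def vscale_def)+
      with e(1) rat_s show ?thesis by blast
    qed
  qed
qed

lemma rational_representative: "\<exists>c. c \<noteq> 0 \<and> (rat_point l \<longrightarrow> rat_vec (vscale c l))"
  unfolding rat_point_def by (metis one_neq_zero)

lemma concurrent_lines_coords:
  assumes "nonzero D" "nonzero L" "nonzero T" "nonzero a"
    and "\<not> proj_eq D L" "\<not> proj_eq D T" "\<not> proj_eq L T"
    and "on_line D a" "on_line L a" "on_line T a"
  obtains r1 r2 r3 s1 s2 s3 c where "coord_change r1 r2 r3 s1 s2 s3"
    "\<And>X. on_line D X \<longleftrightarrow> on_line (1, 0, 0) (lin r1 r2 r3 X)"
    "\<And>X. on_line L X \<longleftrightarrow> on_line (1, 0, -1) (lin r1 r2 r3 X)"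
    "\<And>X. on_line T X \<longleftrightarrow> on_line (0, 0, 1) (lin r1 r2 r3 X)"
    "lin r1 r2 r3 a = vscale c (0, 1, 0)" "c \<noteq> 0"
    "rat_point D \<and> rat_point L \<and> rat_point T \<Longrightarrow>
       rat_vec r1 \<and> rat_vec r2 \<and> rat_vec r3 \<and> rat_vec s1 \<and> rat_vec s2 \<and> rat_vec s3"
proof -
  obtain cD cL cT where c: "cD \<noteq> 0" "cL \<noteq> 0" "cT \<noteq> 0"
    and rat: "rat_point D \<longrightarrow> rat_vec (vscale cD D)" "rat_point L \<longrightarrow> rat_vec (vscale cL L)"
      "rat_point T \<longrightarrow> rat_vec (vscale cT T)"
    using rational_representative by metis
  have same_line: "on_line (vscale cD D) X \<longleftrightarrow> on_line D X" "on_line (vscale cL L) X \<longleftrightarrow> on_line L X"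
    "on_line (vscale cT T) X \<longleftrightarrow> on_line T X" for X
    using c by (simp_all add: on_line_vscale_iff)
  have hyps: "nonzero (vscale cD D)" "nonzero (vscale cL L)" "nonzero (vscale cT T)"
    "\<not> proj_eq (vscale cD D) (vscale cL L)" "\<not> proj_eq (vscale cD D) (vscale cT T)"
    "\<not> proj_eq (vscale cL L) (vscale cT T)"
    "on_line (vscale cD D) a" "on_line (vscale cL L) a" "on_line (vscale cT T) a"
    using assms c by (simp_all add: nonzero_vscale_iff proj_eq_vscale_iff same_line)
  obtain r1 r2 r3 s1 s2 s3 c where cc: "coord_change r1 r2 r3 s1 s2 s3"
    and lines: "\<And>X. on_line (vscale cD D) X \<longleftrightarrow> on_line (1, 0, 0) (lin r1 r2 r3 X)"
      "\<And>X. on_line (vscale cL L) X \<longleftrightarrow> on_line (1, 0, -1) (lin r1 r2 r3 X)"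
      "\<And>X. on_line (vscale cT T) X \<longleftrightarrow> on_line (0, 0, 1) (lin r1 r2 r3 X)"
    and a: "lin r1 r2 r3 a = vscale c (0, 1, 0)" "c \<noteq> 0"
    and rat_coords: "rat_vec (vscale cD D) \<Longrightarrow> rat_vec (vscale cL L) \<Longrightarrow> rat_vec (vscale cT T) \<Longrightarrow>
       rat_vec r1 \<and> rat_vec r2 \<and> rat_vec r3 \<and> rat_vec s1 \<and> rat_vec s2 \<and> rat_vec s3"
    using concurrent_lines_coords_vec[OF hyps(1-3) assms(4) hyps(4-9)] by blast
  show ?thesis
    by (rule that[OF cc lines[unfolded same_line] a]) (use rat rat_coords in blast)
qed

section \<open>Rationality\<close>

lemma rat_vec_lin: "rat_vec s1 \<Longrightarrow> rat_vec s2 \<Longrightarrow> rat_vec s3 \<Longrightarrow> rat_vec p \<Longrightarrow> rat_vec (lin s1 s2 s3 p)"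
  by (cases s1; cases s2; cases s3; cases p) (simp add: rat_vec_def lin_def cdot_def)

lemma rat_point_if_rat_vec: "rat_vec p \<Longrightarrow> rat_point p"
  unfolding rat_point_def by (intro exI[of _ 1]) (simp add: vscale_1)

lemma number_field_Rats: "number_field \<rat>"
proof -
  have span: "(\<rat> :: complex set) \<subseteq> {(\<Sum>b\<in>{1}. of_rat (r b) * b) | r. True}"
  proof
    fix x :: complex assume "x \<in> \<rat>"
    then obtain q where "x = of_rat q" by (auto elim: Rats_cases)
    then show "x \<in> {(\<Sum>b\<in>{1}. of_rat (r b) * b) | r. True}" by (intro CollectI exI[of _ "\<lambda>_. q"]) simp
  qed
  show ?thesis unfolding number_field_def by (intro conjI ballI impI exI[of _ "{1}"]) (use span in auto)
qed

lemma over_number_field_if_Rats: "range F \<subseteq> \<rat> \<Longrightarrow> over_number_field F"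
  unfolding over_number_field_def using number_field_Rats by (intro exI[of _ "\<rat>"] exI[of _ 1]) auto

theorem mainTheorem12:
  fixes D L T a :: cvec
  assumes "nonzero D" and "nonzero L" and "nonzero T" and "nonzero a"
    and "\<not> proj_eq D L" and "\<not> proj_eq D T" and "\<not> proj_eq L T"
    and "on_line D a" and "on_line L a" and "on_line T a"
  shows "\<exists>F PD PL PT.
     is_form 6 F \<and> irreducible_form 6 F \<and> feval 6 F a \<noteq> 0 \<and>
     meets_in 6 F D PD \<and> card PD = 3 \<and>
       (\<forall>p\<in>PD. mult_at 6 F p = 1 \<and> tangent_at 6 F D p) \<and>
     meets_in 6 F L PL \<and> card PL = 3 \<and> (\<forall>p\<in>PL. mult_at 6 F p = 2) \<and>
     meets_in 6 F T PT \<and> card PT = 2 \<and> (\<forall>p\<in>PT. mult_at 6 F p = 3) \<and>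
     ((rat_point D \<and> rat_point L \<and> rat_point T) \<longrightarrow>
        (\<forall>p\<in>PD \<union> PL \<union> PT. rat_point p) \<and> over_number_field F)"
proof -
  let ?rational = "rat_point D \<and> rat_point L \<and> rat_point T"
  obtain r1 r2 r3 s1 s2 s3 c where cc: "coord_change r1 r2 r3 s1 s2 s3"
    and lines: "\<And>X. on_line D X \<longleftrightarrow> on_line (1, 0, 0) (lin r1 r2 r3 X)"
      "\<And>X. on_line L X \<longleftrightarrow> on_line (1, 0, -1) (lin r1 r2 r3 X)"
      "\<And>X. on_line T X \<longleftrightarrow> on_line (0, 0, 1) (lin r1 r2 r3 X)"
    and a: "lin r1 r2 r3 a = vscale c (0, 1, 0)" "c \<noteq> 0"
    and rat: "?rational \<Longrightarrow> rat_vec r1 \<and> rat_vec r2 \<and> rat_vec r3 \<and> rat_vec s1 \<and> rat_vec s2 \<and> rat_vec s3"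
    using concurrent_lines_coords[OF assms] by blast
  define K :: "complex set" where "K = (if ?rational then \<rat> else UNIV)"
  have K: "complex_subsemiring K" "range model_sextic \<subseteq> K" "vec_in K r1" "vec_in K r2" "vec_in K r3"
    using rat
    by (auto simp: K_def complex_subsemiring_def model_sextic_def vec_in_def rat_vec_def split: prod.splits)
  obtain F where F: "homogeneous 6 F" "range F \<subseteq> K"
    and F_eq: "(\<lambda>X. feval 6 model_sextic (lin r1 r2 r3 X)) = feval 6 F"
    using form_fun_compose[OF K(1) homogeneous_model_sextic K(2-5)] unfolding form_fun_def lin_def by blast
  define PD PL PT where "PD = lin s1 s2 s3 ` {(0, -12, 1), (0, 0, 1), (0, 6, 1)}"
    and "PL = lin s1 s2 s3 ` {(1, -5, 1), (1, 1, 1), (1, 7, 1)}" and "PT = lin s1 s2 s3 ` {(1, 0, 0), (1, 6, 0)}"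
  have "sextic_config F D L T a PD PL PT"
    unfolding PD_def PL_def PT_def
    using fun_cong[OF F_eq]
    by (intro coord_change.sextic_config_comp[OF cc sextic_config_model F(1) _ lines a]) simp
  moreover have "(\<forall>p\<in>PD \<union> PL \<union> PT. rat_point p) \<and> over_number_field F" if ?rational
    using rat[OF that] F(2) that
    by (auto simp: PD_def PL_def PT_def K_def rat_vec_def
        intro!: rat_point_if_rat_vec rat_vec_lin over_number_field_if_Rats)
  ultimately show ?thesis unfolding sextic_config_def by (blast intro: irreducible_formI)
qed

end
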